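(* (Operational Friendliness no-go theorem.) If a superobserver can perform arbitrary quantum operations on an observer and its environment, then no physical theory can satisfy Operational Friendliness. Precisely: in the Operational Friendliness scenario described in the context, there is a choice of qubit preparations $P_0,P_1$ and measurements $C$, $D$, $B$ for which the quantum-mechanical empirical distributions $\wp(c,d\mid x=0,y=0)$, $\wp(c,b\mid x=0,y=1)$, $\wp(a,d\mid x=1,y=0)$, $\wp(a,b\mid x=1,y=1)$ cannot be reproduced by any family of distributions $p(a,b,c,d\mid x,y)$ satisfying both Absoluteness of Observed Events and Operational Agency.
   Context: Operational Friendliness scenario: Alice prepares a qubit $S$ in a state $P_a$, where $a\in\{0,1\}$ takes each value with probability $1/2$. She sends $S$ to her friend Charlie, who performs a two-outcome measurement $C$ on $S$ with outcome $c\in\{0,1\}$, modelled (from outside Charlie's lab) by a unitary $U_C$ on $S$ together with Charlie's lab. Alice then has a binary choice $x\in\{0,1\}$: if $x=0$ she takes Charlie's outcome as hers; if $x=1$ she acts as a superobserver and applies $U_C^\dagger$, undoing Charlie's measurement and erasing the record of $c$. The system $S$ is then passed to Debbie, who performs a two-outcome measurement $D$ with outcome $d\in\{0,1\}$, modelled by a unitary $U_D$. Bob has a binary choice $y\in\{0,1\}$: if $y=0$ he takes Debbie's outcome as his outcome ($b=d$); if $y=1$ he applies $U_D^\dagger$, erasing $d$, and then performs a two-outcome measurement $B$ on $S$ with outcome $b\in\{0,1\}$. The empirically accessible (single-agent verifiable) distributions are $\wp(c,d\mid x=0,y=0)$, $\wp(c,b\mid x=0,y=1)$, $\wp(a,d\mid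 x=1,y=0)$, $\wp(a,b\mid x=1,y=1)$, computed by quantum theory (Born rule). Here $\wp$ denotes empirical distributions, $p$ theoretical ones. Absoluteness of Observed Events (AOE): every observed event is an absolute single event, not relative to anything or anyone; in this scenario it implies the existence, for each $x,y$, of joint distributions $p(a,b,c,d\mid x,y)$ over all observed outcomes (including erased ones) whose marginals reproduce the empirical distributions above. Operational Agency: any operational equivalence that would be verified by a hypothetical agent with access to all the relevant variables still holds even if it cannot be verified by a single agent. In this scenario it implies, e.g., $p(c\mid x,y)=p(c)$, $p(c,d\mid x,y)=p(c,d\mid x)$, $p(a,d\mid x,y)=p(a,d\mid x)$, $p(d\mid c,x,y)=p(d\mid c,y)$ and $p(b\mid c,x,y)=p(b\mid c,y)$. Operational Friendliness is the conjunction of AOE and Operational Agency. *)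

theory Defs
  imports "HOL-Analysis.Analysis"
begin

text \<open>Qubit operators: 2x2 complex matrices. Binary outcomes/choices are encoded
  as bool (False = 0, True = 1).\<close>

type_synonym qop = "complex^2^2"

definition adj :: "qop \<Rightarrow> qop" where
  "adj A = (\<chi> i j. cnj (A $ j $ i))"

definition qform :: "qop \<Rightarrow> complex^2 \<Rightarrow> complex" where
  "qform A v = (\<Sum>i\<in>UNIV. cnj (v $ i) * (A *v v) $ i)"

definition psd :: "qop \<Rightarrow> bool" where
  "psd A \<longleftrightarrow> (\<forall>v. Im (qform A v) = 0 \<and> Re (qform A v) \<ge> 0)"

definition qubit_state :: "qop \<Rightarrow> bool" where
  "qubit_state \<rho> \<longleftrightarrow> adj \<rho> = \<rho> \<and> psd \<rho> \<and> trace \<rho> = 1"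

text \<open>Two-outcome projective measurement (ideal von Neumann measurement,
  post-measurement update by the Lueders rule).\<close>
definition proj_meas :: "(bool \<Rightarrow> qop) \<Rightarrow> bool" where
  "proj_meas M \<longleftrightarrow> (\<forall>k. adj (M k) = M k \<and> M k ** M k = M k) \<and> M False + M True = mat 1"

definition born :: "qop \<Rightarrow> qop \<Rightarrow> real" where
  "born E \<rho> = Re (trace (E ** \<rho>))"

definition wp00 :: "(bool \<Rightarrow> qop) \<Rightarrow> (bool \<Rightarrow> qop) \<Rightarrow> (bool \<Rightarrow> qop) \<Rightarrow> bool \<Rightarrow> bool \<Rightarrow> real" where
  "wp00 P C D c d = (\<Sum>a\<in>UNIV. (1/2) * born (D d) (C c ** P a ** C c))"

definition wp01 :: "(bool \<Rightarrow> qop) \<Rightarrow> (bool \<Rightarrow> qop) \<Rightarrow> (bool \<Rightarrow> qop) \<Rightarrow> bool \<Rightarrow> bool \<Rightarrow> real" where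
  "wp01 P C B c b = (\<Sum>a\<in>UNIV. (1/2) * born (B b) (C c ** P a ** C c))"

definition wp10 :: "(bool \<Rightarrow> qop) \<Rightarrow> (bool \<Rightarrow> qop) \<Rightarrow> bool \<Rightarrow> bool \<Rightarrow> real" where
  "wp10 P D a d = (1/2) * born (D d) (P a)"

definition wp11 :: "(bool \<Rightarrow> qop) \<Rightarrow> (bool \<Rightarrow> qop) \<Rightarrow> bool \<Rightarrow> bool \<Rightarrow> real" where
  "wp11 P B a b = (1/2) * born (B b) (P a)"

text \<open>Theoretical distributions: p x y a b c d = p(a,b,c,d | x,y).\<close>
type_synonym dist = "bool \<Rightarrow> bool \<Rightarrow> bool \<Rightarrow> bool \<Rightarrow> bool \<Rightarrow> bool \<Rightarrow> real"

definition is_dist_family :: "dist \<Rightarrow> bool" where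
  "is_dist_family p \<longleftrightarrow> (\<forall>x y a b c d. p x y a b c d \<ge> 0) \<and>
     (\<forall>x y. (\<Sum>a\<in>UNIV. \<Sum>b\<in>UNIV. \<Sum>c\<in>UNIV. \<Sum>d\<in>UNIV. p x y a b c d) = 1)"

definition pc :: "dist \<Rightarrow> bool \<Rightarrow> bool \<Rightarrow> bool \<Rightarrow> real" where
  "pc p x y c = (\<Sum>a\<in>UNIV. \<Sum>b\<in>UNIV. \<Sum>d\<in>UNIV. p x y a b c d)"
definition pcd :: "dist \<Rightarrow> bool \<Rightarrow> bool \<Rightarrow> bool \<Rightarrow> bool \<Rightarrow> real" where
  "pcd p x y c d = (\<Sum>a\<in>UNIV. \<Sum>b\<in>UNIV. p x y a b c d)"
definition pcb :: "dist \<Rightarrow> bool \<Rightarrow> bool \<Rightarrow> bool \<Rightarrow> bool \<Rightarrow> real" where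
  "pcb p x y c b = (\<Sum>a\<in>UNIV. \<Sum>d\<in>UNIV. p x y a b c d)"
definition pad :: "dist \<Rightarrow> bool \<Rightarrow> bool \<Rightarrow> bool \<Rightarrow> bool \<Rightarrow> real" where
  "pad p x y a d = (\<Sum>b\<in>UNIV. \<Sum>c\<in>UNIV. p x y a b c d)"
definition pab :: "dist \<Rightarrow> bool \<Rightarrow> bool \<Rightarrow> bool \<Rightarrow> bool \<Rightarrow> real" where
  "pab p x y a b = (\<Sum>c\<in>UNIV. \<Sum>d\<in>UNIV. p x y a b c d)"

definition AOE :: "(bool \<Rightarrow> qop) \<Rightarrow> (bool \<Rightarrow> qop) \<Rightarrow> (bool \<Rightarrow> qop) \<Rightarrow> (bool \<Rightarrow> qop) \<Rightarrow> dist \<Rightarrow> bool" where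
  "AOE P C D B p \<longleftrightarrow> is_dist_family p \<and>
     (\<forall>c d. pcd p False False c d = wp00 P C D c d) \<and>
     (\<forall>c b. pcb p False True c b = wp01 P C B c b) \<and>
     (\<forall>a d. pad p True False a d = wp10 P D a d) \<and>
     (\<forall>a b. pab p True True a b = wp11 P B a b)"

text \<open>Operational Agency (the consequences listed in the scenario); conditional
  probabilities are ratios of marginals.\<close>
definition op_agency :: "dist \<Rightarrow> bool" where
  "op_agency p \<longleftrightarrow>
     (\<forall>x y x' y' c. pc p x y c = pc p x' y' c) \<and>
     (\<forall>x y y' c d. pcd p x y c d = pcd p x y' c d) \<and>
     (\<forall>x y y' a d. pad p x y a d = pad p x y' a d) \<and>
     (\<forall>x x' y c d. pcd p x y c d / pc p x y c = pcd p x' y c d / pc p x' y c) \<and>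
     (\<forall>x x' y c b. pcb p x y c b / pc p x y c = pcb p x' y c b / pc p x' y c)"

definition operational_friendliness :: "(bool \<Rightarrow> qop) \<Rightarrow> (bool \<Rightarrow> qop) \<Rightarrow> (bool \<Rightarrow> qop) \<Rightarrow> (bool \<Rightarrow> qop) \<Rightarrow> dist \<Rightarrow> bool" where
  "operational_friendliness P C D B p \<longleftrightarrow> AOE P C D B p \<and> op_agency p"

end

theory Submission
  imports Defs
begin

text \<open>Operational Agency transfers the pair marginals of the three settings with \<open>x = 0\<close> or
  \<open>y = 0\<close> to the setting \<open>x = y = 1\<close>, so \<open>p(a,b,c,d|1,1)\<close> would be a single joint
  distribution of four bits reproducing all four empirical pair distributions. Every such
  distribution obeys the chained Bell inequality
  \<open>P(a \<noteq> b) \<le> P(a \<noteq> d) + P(d \<noteq> c) + P(c \<noteq> b)\<close>.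
  Preparing the computational basis states and measuring along the real directions
  \<open>(1,1)\<close>, \<open>(2,1)\<close>, \<open>(1,3)\<close> for \<open>C\<close>, \<open>D\<close>, \<open>B\<close> makes the left-hand side \<open>9/10\<close> and
  the right-hand side \<open>1/5 + 1/10 + 1/5\<close>.\<close>

definition mismatch :: "(bool \<Rightarrow> bool \<Rightarrow> real) \<Rightarrow> real" where
  "mismatch m = m False True + m True False"

text \<open>Pointwise, \<open>a = d\<close>, \<open>d = c\<close> and \<open>c = b\<close> force \<open>a = b\<close>.\<close>

lemma chained_bell_inequality:
  assumes "\<forall>a b c d. 0 \<le> p x y a b c d"
  shows "mismatch (pab p x y) \<le> mismatch (pad p x y) + mismatch (pcd p x y) + mismatch (pcb p x y)"
  using assms unfolding mismatch_def pab_def pad_def pcd_def pcb_def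
  by (simp add: UNIV_bool all_bool_eq)

lemma eq_if_divide_eq_bounded:
  fixes u u' w :: real
  assumes "u / w = u' / w" "0 \<le> u" "u \<le> w" "0 \<le> u'" "u' \<le> w"
  shows "u = u'"
  using assms by (cases "w = 0") auto

lemma pcd_bounds:
  assumes "\<forall>a b c d. 0 \<le> p x y a b c d"
  shows "0 \<le> pcd p x y c d" "pcd p x y c d \<le> pc p x y c"
  using assms unfolding pcd_def pc_def by (cases c; cases d; simp add: UNIV_bool all_bool_eq)+

lemma pcb_bounds:
  assumes "\<forall>a b c d. 0 \<le> p x y a b c d"
  shows "0 \<le> pcb p x y c b" "pcb p x y c b \<le> pc p x y c"
  using assms unfolding pcb_def pc_def by (cases c; cases b; simp add: UNIV_bool all_bool_eq)+

text \<open>Conditioning on \<open>c\<close> removes the dependence on \<open>x\<close>; when \<open>p(c)\<close> vanishes the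
  conditional equations carry no information, but then nonnegativity forces the joint
  marginals to vanish as well.\<close>

lemma op_agency_pair_marginals:
  assumes agency: "op_agency p" and nonneg: "\<forall>x y a b c d. 0 \<le> p x y a b c d"
  shows "pcd p True True = pcd p False False"
    and "pcb p True True = pcb p False True"
    and "pad p True True = pad p True False"
proof -
  have pc: "pc p x y c = pc p x' y' c" for x y x' y' c
    using agency unfolding op_agency_def by simp
  have pcd_cond: "pcd p x y c d / pc p x y c = pcd p x' y c d / pc p x' y c" for x x' y c d
    using agency unfolding op_agency_def by simp
  have pcb_cond: "pcb p x y c b / pc p x y c = pcb p x' y c b / pc p x' y c" for x x' y c b
    using agency unfolding op_agency_def by simp
  have nonneg_xy: "\<forall>a b c d. 0 \<le> p x y a b c d" for x y
    using nonneg by blast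
  show "pcd p True True = pcd p False False"
  proof (intro ext)
    fix c d
    have "pcd p True False c d = pcd p False False c d"
    proof (rule eq_if_divide_eq_bounded)
      show "pcd p True False c d / pc p False False c = pcd p False False c d / pc p False False c"
        using pcd_cond [of True False c d False] pc [of True False c False False] by simp
      show "pcd p True False c d \<le> pc p False False c"
        using pcd_bounds(2) [of p True False c d, OF nonneg_xy] pc [of True False c False False]
        by simp
    qed (use pcd_bounds [OF nonneg_xy] in auto)
    moreover have "pcd p True True c d = pcd p True False c d"
      using agency unfolding op_agency_def by simp
    ultimately show "pcd p True True c d = pcd p False False c d" by simp
  qed
  show "pcb p True True = pcb p False True"
  proof (intro ext)
    fix c b
    show "pcb p True True c b = pcb p False True c b"
    proof (rule eq_if_divide_eq_bounded)
      show "pcb p True True c b / pc p False True c = pcb p False True c b / pc p False True c"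
        using pcb_cond [of True True c b False] pc [of True True c False True] by simp
      show "pcb p True True c b \<le> pc p False True c"
        using pcb_bounds(2) [of p True True c b, OF nonneg_xy] pc [of True True c False True]
        by simp
    qed (use pcb_bounds [OF nonneg_xy] in auto)
  qed
  show "pad p True True = pad p True False"
    using agency unfolding op_agency_def by (simp add: fun_eq_iff)
qed

lemma operational_friendliness_chained_bell:
  assumes "operational_friendliness P C D B p"
  shows "mismatch (wp11 P B) \<le> mismatch (wp10 P D) + mismatch (wp00 P C D) + mismatch (wp01 P C B)"
proof -
  have aoe: "AOE P C D B p" and agency: "op_agency p"
    using assms unfolding operational_friendliness_def by simp_all
  then have nonneg: "\<forall>x y a b c d. 0 \<le> p x y a b c d"
    unfolding AOE_def is_dist_family_def by blast
  have "pab p True True = wp11 P B" "pad p True False = wp10 P D"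
    "pcd p False False = wp00 P C D" "pcb p False True = wp01 P C B"
    using aoe unfolding AOE_def by (simp_all add: fun_eq_iff)
  with op_agency_pair_marginals [OF agency nonneg] show ?thesis
    using chained_bell_inequality [of p True True] nonneg by metis
qed

definition mat2 :: "complex \<Rightarrow> complex \<Rightarrow> complex \<Rightarrow> complex \<Rightarrow> qop" where
  "mat2 a b c d = (\<chi> i j. if i = 1 then (if j = 1 then a else b) else (if j = 1 then c else d))"

lemma mat2_nth [simp]:
  "mat2 a b c d $ 1 $ 1 = a" "mat2 a b c d $ 1 $ 2 = b"
  "mat2 a b c d $ 2 $ 1 = c" "mat2 a b c d $ 2 $ 2 = d"
  by (simp_all add: mat2_def)

lemma mat2_mult:
  "mat2 a b c d ** mat2 a' b' c' d' =
     mat2 (a*a' + b*c') (a*b' + b*d') (c*a' + d*c') (c*b' + d*d')"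
  unfolding matrix_matrix_mult_def by (simp add: vec_eq_iff forall_2 sum_2)

lemma mat2_add: "mat2 a b c d + mat2 a' b' c' d' = mat2 (a+a') (b+b') (c+c') (d+d')"
  by (simp add: vec_eq_iff forall_2)

lemma mat2_one: "mat 1 = mat2 1 0 0 1"
  by (simp add: vec_eq_iff forall_2 mat_def)

lemma adj_mat2: "adj (mat2 a b c d) = mat2 (cnj a) (cnj c) (cnj b) (cnj d)"
  by (simp add: vec_eq_iff forall_2 adj_def)

lemma trace_mat2: "trace (mat2 a b c d) = a + d"
  by (simp add: trace_def sum_2)

lemma qform_mat2:
  "qform (mat2 a b c d) v = cnj (v$1) * (a * v$1 + b * v$2) + cnj (v$2) * (c * v$1 + d * v$2)"
  by (simp add: qform_def sum_2 matrix_vector_mult_def)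

lemma mat2_eq_iff: "mat2 a b c d = mat2 a' b' c' d' \<longleftrightarrow> a = a' \<and> b = b' \<and> c = c' \<and> d = d'"
  by (metis mat2_nth)

lemma mat2_of_real_add:
  "mat2 (of_real a) (of_real b) (of_real c) (of_real d) +
   mat2 (of_real a') (of_real b') (of_real c') (of_real d') =
     mat2 (of_real (a + a')) (of_real (b + b')) (of_real (c + c')) (of_real (d + d'))"
  by (simp add: mat2_add)

lemma mat2_of_real_mult:
  "mat2 (of_real a) (of_real b) (of_real c) (of_real d) **
   mat2 (of_real a') (of_real b') (of_real c') (of_real d') =
     mat2 (of_real (a*a' + b*c')) (of_real (a*b' + b*d')) (of_real (c*a' + d*c'))
       (of_real (c*b' + d*d'))"
  by (simp add: mat2_mult)

text \<open>The projector onto the line spanned by \<open>(s, t)\<close>; it is the zero matrix for \<open>s = t = 0\<close>.\<close>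

definition ray_proj :: "real \<Rightarrow> real \<Rightarrow> qop" where
  "ray_proj s t = (let n = s\<^sup>2 + t\<^sup>2 in
     mat2 (of_real (s\<^sup>2 / n)) (of_real (s * t / n)) (of_real (s * t / n)) (of_real (t\<^sup>2 / n)))"

definition ray_meas :: "real \<Rightarrow> real \<Rightarrow> bool \<Rightarrow> qop" where
  "ray_meas s t k = (if k then ray_proj (- t) s else ray_proj s t)"

lemma adj_ray_proj: "adj (ray_proj s t) = ray_proj s t"
  by (simp add: ray_proj_def adj_mat2 Let_def)

lemma trace_ray_proj: "s\<^sup>2 + t\<^sup>2 \<noteq> 0 \<Longrightarrow> trace (ray_proj s t) = 1"
proof -
  assume "s\<^sup>2 + t\<^sup>2 \<noteq> 0"
  then have "s\<^sup>2 / (s\<^sup>2 + t\<^sup>2) + t\<^sup>2 / (s\<^sup>2 + t\<^sup>2) = 1"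
    by (simp flip: add_divide_distrib)
  then show ?thesis
    unfolding ray_proj_def Let_def trace_mat2 of_real_add [symmetric] by simp
qed

lemma ray_proj_idem:
  assumes "s\<^sup>2 + t\<^sup>2 \<noteq> 0"
  shows "ray_proj s t ** ray_proj s t = ray_proj s t"
proof -
  define n where "n = s\<^sup>2 + t\<^sup>2"
  have n: "s * s + t * t = n" "n \<noteq> 0"
    using assms by (simp_all add: n_def power2_eq_square)
  show ?thesis
    unfolding ray_proj_def Let_def n_def [symmetric] mat2_of_real_mult mat2_eq_iff of_real_eq_iff
    using n by (simp add: field_simps power2_eq_square) (simp add: n(1) [symmetric] algebra_simps)
qed

lemma ray_proj_add_orthogonal: "s\<^sup>2 + t\<^sup>2 \<noteq> 0 \<Longrightarrow> ray_proj s t + ray_proj (- t) s = mat 1"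
  unfolding ray_proj_def Let_def mat2_of_real_add mat2_one mat2_eq_iff
    of_real_eq_1_iff of_real_eq_0_iff
  by (simp add: add.commute flip: add_divide_distrib)

lemma qform_ray_proj:
  "qform (ray_proj s t) v = of_real ((cmod (s * v$1 + t * v$2))\<^sup>2 / (s\<^sup>2 + t\<^sup>2))"
  unfolding ray_proj_def Let_def qform_mat2 complex_norm_square of_real_divide
  by (simp add: divide_simps) (simp add: algebra_simps power2_eq_square)

lemma qubit_state_ray_proj: "s\<^sup>2 + t\<^sup>2 \<noteq> 0 \<Longrightarrow> qubit_state (ray_proj s t)"
  by (simp add: qubit_state_def psd_def adj_ray_proj trace_ray_proj qform_ray_proj)

lemma proj_meas_ray_meas: "s\<^sup>2 + t\<^sup>2 \<noteq> 0 \<Longrightarrow> proj_meas (ray_meas s t)"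
proof -
  assume n: "s\<^sup>2 + t\<^sup>2 \<noteq> 0"
  then have n': "(- t)\<^sup>2 + s\<^sup>2 \<noteq> 0" by (simp add: add.commute)
  show ?thesis
    unfolding proj_meas_def ray_meas_def
    using adj_ray_proj ray_proj_idem [OF n] ray_proj_idem [OF n'] ray_proj_add_orthogonal [OF n]
    by simp
qed

lemma quantum_mismatches:
  "mismatch (wp11 (ray_meas 1 0) (ray_meas 1 3)) = 9/10"
  "mismatch (wp10 (ray_meas 1 0) (ray_meas 2 1)) = 1/5"
  "mismatch (wp00 (ray_meas 1 0) (ray_meas 1 1) (ray_meas 2 1)) = 1/10"
  "mismatch (wp01 (ray_meas 1 0) (ray_meas 1 1) (ray_meas 1 3)) = 1/5"
  by (simp_all add: mismatch_def wp00_def wp01_def wp10_def wp11_def born_def ray_meas_def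
      ray_proj_def mat2_mult trace_mat2 UNIV_bool)

theorem theorem2:
  shows "\<exists>P C D B. qubit_state (P False) \<and> qubit_state (P True) \<and>
           proj_meas C \<and> proj_meas D \<and> proj_meas B \<and>
           \<not> (\<exists>p. operational_friendliness P C D B p)"
proof (intro exI conjI)
  show "qubit_state (ray_meas 1 0 False)" "qubit_state (ray_meas 1 0 True)"
    by (simp_all add: ray_meas_def qubit_state_ray_proj)
  show "proj_meas (ray_meas 1 1)" "proj_meas (ray_meas 2 1)" "proj_meas (ray_meas 1 3)"
    by (simp_all add: proj_meas_ray_meas)
  show "\<nexists>p. operational_friendliness (ray_meas 1 0) (ray_meas 1 1) (ray_meas 2 1) (ray_meas 1 3) p"
  proof (intro notI, elim exE)
    fix p
    assume "operational_friendliness (ray_meas 1 0) (ray_meas 1 1) (ray_meas 2 1) (ray_meas 1 3) p"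
    from operational_friendliness_chained_bell [OF this] show False
      by (simp add: quantum_mismatches)
  qed
qed

end
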